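(* Let $X$ be a real random variable with law $\mu$ describing the agents' types, with $\mu$ satisfying the standing assumptions below and $\int|x|\,d\mu<+\infty$. If $\vec v_\mu$ is the optimal percentile vector associated with $X$, then $\vec v_\mu$ is also the optimal percentile vector for every random variable of the form $X'=\sigma X+m$ with $m\in\mathbb{R}$ and $\sigma>0$.
   Context: For $\vec x\in\mathbb{R}^n$, $\vec y\in\mathbb{R}^k$: $SC(\vec x,\vec y)=\frac1n\sum_i\min_j|x_i-y_j|$, $SC_{opt}(\vec x)=\min_{\vec y}SC(\vec x,\vec y)$. A percentile vector is $\vec v$ with $0\le v_1\le\dots\le v_k\le1$; $\mathcal{PM}_{\vec v}$ sorts the reports $x_{(1)}\le\dots\le x_{(n)}$ and places facility $j$ at $x_{(\lfloor(n-1)v_j\rfloor+1)}$. For a law $\eta$ and $\vec X_n$ i.i.d. of law $\eta$, $B^{(n)}_{ar}(f)=\mathbb{E}[SC_f(\vec X_n)]/\mathbb{E}[SC_{opt}(\vec X_n)]$. The optimal percentile vector associated with a random variable of law $\eta$ is $(F_\eta(y_1),\dots,F_\eta(y_k))$, where $y_1\le\dots\le y_k$ are the support points of a solution of $\min_{\lambda\in\mathcal{P}_k(\mathbb{R})}W_1(\eta,\lambda)$ ($\mathcal{P}_k(\mathbb{R})$: probability measures $\sum_{j=1}^k\nu_j\delta_{x_j}$; $W_1$: 1-Wasserstein distance; $F_\eta$: c.d.f.); it satisfies $\lim_n B^{(n)}_{ar}(\mathcal{PM}_{\vec v})=1$. Standing assumptions on $\mu$: absolutely continuous with density $\rho_\mu$;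 support an interval on whose interior $\rho_\mu>0$; $\rho_\mu$ differentiable on the support. *)

theory Defs
  imports "HOL-Probability.Probability"
begin

definition couplings :: "real measure \<Rightarrow> real measure \<Rightarrow> (real \<times> real) measure set" where
  "couplings \<eta> L = {\<pi>. sets \<pi> = sets (borel :: (real \<times> real) measure) \<and> prob_space \<pi> \<and>
      distr \<pi> borel fst = \<eta> \<and> distr \<pi> borel snd = L}"

definition W1 :: "real measure \<Rightarrow> real measure \<Rightarrow> ennreal" where
  "W1 \<eta> L = (INF \<pi> \<in> couplings \<eta> L. \<integral>\<^sup>+ z. ennreal \<bar>fst z - snd z\<bar> \<partial>\<pi>)"

definition Pk :: "nat \<Rightarrow> real measure set" where
  "Pk k = {L. \<exists>p :: real pmf. finite (set_pmf p) \<and> card (set_pmf p) \<le> k \<and>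
                 L = distr (measure_pmf p) borel (\<lambda>x. x)}"

definition support_points :: "real measure \<Rightarrow> real set" where
  "support_points L = {x. measure L {x} > 0}"

definition opt_percentile_vectors :: "real measure \<Rightarrow> nat \<Rightarrow> real list set" where
  "opt_percentile_vectors \<eta> k =
     {map (cdf \<eta>) (sorted_list_of_set (support_points L)) | L.
        L \<in> Pk k \<and> W1 \<eta> L = (INF L' \<in> Pk k. W1 \<eta> L')}"

end

(* The map T x = \<sigma> x + m sends a coupling of (\<eta>, L) to a coupling of (T\<eta>, TL) and
   multiplies the transport cost |x - y| by \<sigma>; applying the same to the inverse map gives
   W1(T\<eta>, TL) = \<sigma> W1(\<eta>, L).  As T also maps P_k onto itself, it carries W1-minimisers over
   P_k for \<eta> to minimisers for T\<eta>.  Being increasing, T preserves the order of the support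
   points, and F_{T\<eta>}(T y) = F_\<eta>(y), so the percentile vector does not change. *)

theory Submission
  imports Defs
begin

(* c > 0 matters: for A = {} the right-hand side is c * \<infinity>, which is 0 when c = 0. *)
lemma ennreal_le_cmult_INF:
  fixes f :: "'a \<Rightarrow> ennreal"
  assumes "c > 0" and "\<And>x. x \<in> A \<Longrightarrow> a \<le> ennreal c * f x"
  shows "a \<le> ennreal c * (INF x\<in>A. f x)"
proof -
  have "a / ennreal c \<le> (INF x\<in>A. f x)"
    using assms by (intro INF_greatest divide_le_posI_ennreal) auto
  then have "ennreal c * (a / ennreal c) \<le> ennreal c * (INF x\<in>A. f x)"
    by (rule mult_left_mono) simp
  moreover have "ennreal c * (a / ennreal c) = a"
    using assms(1) by (simp add: ennreal_times_divide mult.commute mult_divide_eq_ennreal)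
  ultimately show ?thesis by simp
qed

lemma distr_distr_inverse:
  assumes "sets M = sets N" and "T \<in> measurable N K" and "S \<in> measurable K N"
    and "\<And>x. x \<in> space M \<Longrightarrow> S (T x) = x"
  shows "distr (distr M K T) N S = M"
proof -
  have "distr (distr M K T) N S = distr M N (S \<circ> T)"
    by (rule distr_distr[OF assms(3)]) (simp add: measurable_cong_sets[OF assms(1) refl] assms(2))
  also have "\<dots> = distr M N (\<lambda>x. x)"
    using assms(4) by (intro distr_cong) auto
  also have "\<dots> = M"
    using assms(1) by (simp add: distr_id2)
  finally show ?thesis .
qed

lemma borel_measurable_map_prod:
  fixes T :: "'a::second_countable_topology \<Rightarrow> 'c::second_countable_topology"
    and S :: "'b::second_countable_topology \<Rightarrow> 'd::second_countable_topology"
  assumes T: "T \<in> borel_measurable borel" and S: "S \<in> borel_measurable borel"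
  shows "map_prod T S \<in> borel_measurable borel"
proof -
  have "map_prod T S \<in> measurable (borel \<Otimes>\<^sub>M borel) (borel \<Otimes>\<^sub>M borel)"
    unfolding map_prod_def split_beta'
    by (intro measurable_Pair measurable_compose[OF measurable_fst T] measurable_compose[OF measurable_snd S])
  then show ?thesis
    by (simp only: borel_prod)
qed

lemma couplings_distr_map_prod:
  assumes \<pi>: "\<pi> \<in> couplings \<eta> L"
    and T: "T \<in> borel_measurable borel" and S: "S \<in> borel_measurable borel"
  shows "distr \<pi> borel (map_prod T S) \<in> couplings (distr \<eta> borel T) (distr L borel S)"
proof -
  have sets_\<pi>: "sets \<pi> = sets borel" and "prob_space \<pi>"
    and fst_\<pi>: "distr \<pi> borel fst = \<eta>" and snd_\<pi>: "distr \<pi> borel snd = L"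
    using \<pi> by (auto simp: couplings_def)
  have meas_\<pi>: "f \<in> measurable \<pi> N \<longleftrightarrow> f \<in> measurable borel N" for f and N :: "'b measure"
    by (simp add: measurable_cong_sets[OF sets_\<pi> refl])
  have meas: "map_prod T S \<in> measurable \<pi> borel"
    unfolding meas_\<pi> using T S by (rule borel_measurable_map_prod)
  have fst: "(fst :: real \<times> real \<Rightarrow> real) \<in> borel_measurable borel"
    and snd: "(snd :: real \<times> real \<Rightarrow> real) \<in> borel_measurable borel"
    by (intro borel_measurable_continuous_onI continuous_intros)+
  have "distr (distr \<pi> borel (map_prod T S)) borel fst = distr \<pi> borel (T \<circ> fst)"
    using distr_distr[OF fst meas] by simp
  also have "\<dots> = distr \<eta> borel T"
    unfolding fst_\<pi>[symmetric] by (rule distr_distr[symmetric, OF T]) (simp add: meas_\<pi> fst)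
  finally have fst_marginal: "distr (distr \<pi> borel (map_prod T S)) borel fst = distr \<eta> borel T" .
  have "distr (distr \<pi> borel (map_prod T S)) borel snd = distr \<pi> borel (S \<circ> snd)"
    using distr_distr[OF snd meas] by simp
  also have "\<dots> = distr L borel S"
    unfolding snd_\<pi>[symmetric] by (rule distr_distr[symmetric, OF S]) (simp add: meas_\<pi> snd)
  finally have snd_marginal: "distr (distr \<pi> borel (map_prod T S)) borel snd = distr L borel S" .
  have "prob_space (distr \<pi> borel (map_prod T S))"
    using meas by (rule prob_space.prob_space_distr[OF \<open>prob_space \<pi>\<close>])
  then show ?thesis
    unfolding couplings_def using fst_marginal snd_marginal by (intro CollectI conjI) simp_all
qed

lemma W1_distr_lipschitz_le:
  assumes lip: "c-lipschitz_on UNIV T" and "c > 0"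
  shows "W1 (distr \<eta> borel T) (distr L borel T) \<le> ennreal c * W1 \<eta> L"
  unfolding W1_def[of \<eta>]
proof (rule ennreal_le_cmult_INF[OF \<open>c > 0\<close>])
  fix \<pi> assume \<pi>: "\<pi> \<in> couplings \<eta> L"
  then have sets_\<pi>: "sets \<pi> = sets borel"
    by (simp add: couplings_def)
  have T: "T \<in> borel_measurable borel"
    using lipschitz_on_continuous_on[OF lip] by (rule borel_measurable_continuous_onI)
  have cost: "(\<lambda>z::real \<times> real. ennreal \<bar>fst z - snd z\<bar>) \<in> borel_measurable borel"
    by (intro measurable_compose[OF _ measurable_ennreal] borel_measurable_continuous_onI continuous_intros)
  have map_prod_meas: "map_prod T T \<in> measurable \<pi> borel"
    unfolding measurable_cong_sets[OF sets_\<pi> refl] using T T by (rule borel_measurable_map_prod)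
  have "W1 (distr \<eta> borel T) (distr L borel T)
      \<le> (\<integral>\<^sup>+ z. ennreal \<bar>fst z - snd z\<bar> \<partial>distr \<pi> borel (map_prod T T))"
    unfolding W1_def by (rule INF_lower) (rule couplings_distr_map_prod[OF \<pi> T T])
  also have "\<dots> = (\<integral>\<^sup>+ z. ennreal \<bar>fst (map_prod T T z) - snd (map_prod T T z)\<bar> \<partial>\<pi>)"
    by (rule nn_integral_distr[OF map_prod_meas]) (simp add: cost)
  also have "\<dots> = (\<integral>\<^sup>+ z. ennreal \<bar>T (fst z) - T (snd z)\<bar> \<partial>\<pi>)"
    by simp
  also have "\<dots> \<le> (\<integral>\<^sup>+ z. ennreal c * ennreal \<bar>fst z - snd z\<bar> \<partial>\<pi>)"
  proof (rule nn_integral_mono)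
    fix z :: "real \<times> real"
    have "\<bar>T (fst z) - T (snd z)\<bar> \<le> c * \<bar>fst z - snd z\<bar>"
      using lipschitz_onD[OF lip UNIV_I UNIV_I] by (simp add: dist_real_def)
    then show "ennreal \<bar>T (fst z) - T (snd z)\<bar> \<le> ennreal c * ennreal \<bar>fst z - snd z\<bar>"
      using \<open>c > 0\<close> by (simp add: ennreal_mult[symmetric] ennreal_leI)
  qed
  also have "\<dots> = ennreal c * (\<integral>\<^sup>+ z. ennreal \<bar>fst z - snd z\<bar> \<partial>\<pi>)"
    by (rule nn_integral_cmult) (simp only: measurable_cong_sets[OF sets_\<pi> refl] cost)
  finally show "W1 (distr \<eta> borel T) (distr L borel T) \<le> ennreal c * (\<integral>\<^sup>+ z. ennreal \<bar>fst z - snd z\<bar> \<partial>\<pi>)" .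
qed

lemma lipschitz_on_affine: "\<bar>a\<bar>-lipschitz_on U (\<lambda>x::real. a * x + b)"
  by (rule lipschitz_onI) (auto simp: dist_real_def abs_mult simp flip: right_diff_distrib)

lemma W1_distr_affine:
  fixes a b :: real
  assumes "a \<noteq> 0" and sets_\<eta>: "sets \<eta> = sets borel" and sets_L: "sets L = sets borel"
  shows "W1 (distr \<eta> borel (\<lambda>x. a * x + b)) (distr L borel (\<lambda>x. a * x + b)) = ennreal \<bar>a\<bar> * W1 \<eta> L"
    (is "?W = _")
proof (rule antisym)
  show "?W \<le> ennreal \<bar>a\<bar> * W1 \<eta> L"
    using \<open>a \<noteq> 0\<close> by (intro W1_distr_lipschitz_le lipschitz_on_affine) simp
  let ?S = "\<lambda>y. (1 / a) * y + (- b / a)"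
  have inverse: "distr (distr M borel (\<lambda>x. a * x + b)) borel ?S = M" if "sets M = sets borel" for M
    using that \<open>a \<noteq> 0\<close> by (intro distr_distr_inverse) (auto simp: field_simps)
  have "W1 \<eta> L \<le> ennreal \<bar>1 / a\<bar> * ?W"
    using W1_distr_lipschitz_le[OF lipschitz_on_affine[where a = "1 / a" and b = "- b / a"],
        where \<eta> = "distr \<eta> borel (\<lambda>x. a * x + b)" and L = "distr L borel (\<lambda>x. a * x + b)"] \<open>a \<noteq> 0\<close>
    unfolding inverse[OF sets_\<eta>] inverse[OF sets_L] by simp
  then have "ennreal \<bar>a\<bar> * W1 \<eta> L \<le> ennreal \<bar>a\<bar> * (ennreal \<bar>1 / a\<bar> * ?W)"
    by (rule mult_left_mono) simp
  also have "\<dots> = ?W"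
    using \<open>a \<noteq> 0\<close> by (simp add: mult.assoc[symmetric] ennreal_mult[symmetric] abs_mult[symmetric])
  finally show "ennreal \<bar>a\<bar> * W1 \<eta> L \<le> ?W" .
qed

lemma Pk_sets: "L \<in> Pk k \<Longrightarrow> sets L = sets borel"
  by (auto simp: Pk_def)

lemma Pk_distr:
  assumes "L \<in> Pk k" and T: "T \<in> borel_measurable borel"
  shows "distr L borel T \<in> Pk k"
proof -
  obtain p :: "real pmf" where p: "finite (set_pmf p)" "card (set_pmf p) \<le> k"
    and L: "L = distr (measure_pmf p) borel (\<lambda>x. x)"
    using assms(1) by (auto simp: Pk_def)
  have "distr L borel T = distr (measure_pmf (map_pmf T p)) borel (\<lambda>x. x)"
    unfolding L map_pmf_rep_eq using T by (simp add: distr_distr comp_def)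
  moreover have "card (set_pmf (map_pmf T p)) \<le> k"
    using p card_image_le[OF p(1), of T] by simp
  ultimately show ?thesis
    unfolding Pk_def using p(1) by (intro CollectI exI[of _ "map_pmf T p"]) simp
qed

lemma support_points_distr_inj:
  fixes T :: "real \<Rightarrow> real"
  assumes "inj T" and T: "T \<in> borel_measurable borel" and sets_L: "sets L = sets borel"
  shows "support_points (distr L borel T) = T ` support_points L"
proof -
  have T_L: "T \<in> borel_measurable L"
    using T by (simp add: measurable_cong_sets[OF sets_L refl])
  have point_mass: "measure (distr L borel T) {y} = measure L (T -` {y})" for y
    using measure_distr[OF T_L, of "{y}"] sets_eq_imp_space_eq[OF sets_L] by simp
  show ?thesis
  proof (rule set_eqI)
    fix y
    show "y \<in> support_points (distr L borel T) \<longleftrightarrow> y \<in> T ` support_points L"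
    proof (cases "y \<in> range T")
      case True
      then obtain x where "y = T x"
        by blast
      moreover have "T -` {T x} = {x}"
        using \<open>inj T\<close> by (auto dest: injD)
      ultimately show ?thesis
        using \<open>inj T\<close> by (simp add: support_points_def point_mass inj_image_mem_iff)
    next
      case False
      then have "T -` {y} = {}"
        by blast
      then show ?thesis
        using False by (auto simp: support_points_def point_mass)
    qed
  qed
qed

lemma sorted_list_of_set_image_strict_mono:
  fixes f :: "'a::linorder \<Rightarrow> 'b::linorder"
  assumes "strict_mono_on A f"
  shows "sorted_list_of_set (f ` A) = map f (sorted_list_of_set A)"
proof (cases "finite A")
  case True
  have "sorted_wrt (<) (sorted_list_of_set A)"
    by (rule strict_sorted_list_of_set)
  then have "sorted_wrt (<) (map f (sorted_list_of_set A))"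
    unfolding sorted_wrt_map
    by (rule sorted_wrt_mono_rel[rotated]) (use assms True in \<open>auto intro: strict_mono_onD\<close>)
  then have "sorted_list_of_set (set (map f (sorted_list_of_set A))) = map f (sorted_list_of_set A)"
    by (intro sorted_list_of_set.idem_if_sorted_distinct) (simp_all add: strict_sorted_iff)
  then show ?thesis
    using True by simp
next
  case False
  then have "infinite (f ` A)"
    using strict_mono_on_imp_inj_on[OF assms] finite_image_iff by blast
  then show ?thesis
    using False by simp
qed

lemma cdf_distr_strict_mono:
  fixes T :: "real \<Rightarrow> real"
  assumes "strict_mono T" and T: "T \<in> borel_measurable borel" and sets_\<eta>: "sets \<eta> = sets borel"
  shows "cdf (distr \<eta> borel T) (T y) = cdf \<eta> y"
proof -
  have T_\<eta>: "T \<in> borel_measurable \<eta>"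
    using T by (simp add: measurable_cong_sets[OF sets_\<eta> refl])
  have "T -` {..T y} = {..y}"
    using \<open>strict_mono T\<close> by (auto simp: strict_mono_less_eq)
  then show ?thesis
    unfolding cdf_def using measure_distr[OF T_\<eta>, of "{..T y}"] sets_eq_imp_space_eq[OF sets_\<eta>]
    by simp
qed

lemma W1_Pk_minimiser_distr_affine:
  fixes a b :: real
  assumes "a \<noteq> 0" and sets_\<eta>: "sets \<eta> = sets borel"
    and L: "L \<in> Pk k" and min: "W1 \<eta> L = (INF L'\<in>Pk k. W1 \<eta> L')"
  shows "W1 (distr \<eta> borel (\<lambda>x. a * x + b)) (distr L borel (\<lambda>x. a * x + b))
       = (INF L'\<in>Pk k. W1 (distr \<eta> borel (\<lambda>x. a * x + b)) L')"
proof (rule antisym)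
  let ?T = "\<lambda>x. a * x + b" and ?S = "\<lambda>y. (1 / a) * y + (- b / a)"
  have T: "?T \<in> borel_measurable borel" and S: "?S \<in> borel_measurable borel"
    by simp_all
  show "(INF L'\<in>Pk k. W1 (distr \<eta> borel ?T) L') \<le> W1 (distr \<eta> borel ?T) (distr L borel ?T)"
    by (rule INF_lower) (rule Pk_distr[OF L T])
  show "W1 (distr \<eta> borel ?T) (distr L borel ?T) \<le> (INF L'\<in>Pk k. W1 (distr \<eta> borel ?T) L')"
  proof (rule INF_greatest)
    fix L' assume L': "L' \<in> Pk k"
    have "W1 (distr \<eta> borel ?T) (distr L borel ?T) = ennreal \<bar>a\<bar> * W1 \<eta> L"
      by (rule W1_distr_affine[OF \<open>a \<noteq> 0\<close> sets_\<eta> Pk_sets[OF L]])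
    also have "\<dots> \<le> ennreal \<bar>a\<bar> * W1 \<eta> (distr L' borel ?S)"
      unfolding min by (intro mult_left_mono INF_lower Pk_distr[OF L' S]) simp
    also have "\<dots> = W1 (distr \<eta> borel ?T) (distr (distr L' borel ?S) borel ?T)"
      by (rule W1_distr_affine[OF \<open>a \<noteq> 0\<close> sets_\<eta>, symmetric]) simp
    also have "distr (distr L' borel ?S) borel ?T = L'"
      using Pk_sets[OF L'] \<open>a \<noteq> 0\<close> by (intro distr_distr_inverse) (auto simp: field_simps)
    finally show "W1 (distr \<eta> borel ?T) (distr L borel ?T) \<le> W1 (distr \<eta> borel ?T) L'" .
  qed
qed

lemma opt_percentile_vectors_distr_affine:
  fixes \<sigma> m :: real
  assumes "\<sigma> > 0" and sets_\<eta>: "sets \<eta> = sets borel"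
  shows "opt_percentile_vectors \<eta> k \<subseteq> opt_percentile_vectors (distr \<eta> borel (\<lambda>x. \<sigma> * x + m)) k"
proof
  let ?T = "\<lambda>x. \<sigma> * x + m"
  fix v assume "v \<in> opt_percentile_vectors \<eta> k"
  then obtain L where L: "L \<in> Pk k" and min: "W1 \<eta> L = (INF L'\<in>Pk k. W1 \<eta> L')"
    and v: "v = map (cdf \<eta>) (sorted_list_of_set (support_points L))"
    unfolding opt_percentile_vectors_def by blast
  have T: "?T \<in> borel_measurable borel"
    by simp
  have mono: "strict_mono ?T"
    using \<open>\<sigma> > 0\<close> by (intro strict_monoI) simp
  have "map (cdf (distr \<eta> borel ?T)) (sorted_list_of_set (support_points (distr L borel ?T)))
      = map (cdf (distr \<eta> borel ?T) \<circ> ?T) (sorted_list_of_set (support_points L))"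
    unfolding support_points_distr_inj[OF strict_mono_on_imp_inj_on[OF mono] T Pk_sets[OF L]]
      sorted_list_of_set_image_strict_mono[OF monotone_on_subset[OF mono subset_UNIV]]
    by simp
  also have "\<dots> = v"
    unfolding v using cdf_distr_strict_mono[OF mono T sets_\<eta>] by (simp add: comp_def)
  finally show "v \<in> opt_percentile_vectors (distr \<eta> borel ?T) k"
    using Pk_distr[OF L T] W1_Pk_minimiser_distr_affine[OF _ sets_\<eta> L min] \<open>\<sigma> > 0\<close>
    unfolding opt_percentile_vectors_def by auto
qed

theorem theorem8:
  fixes M :: "'a measure" and X :: "'a \<Rightarrow> real" and \<rho> :: "real \<Rightarrow> real"
    and I :: "real set" and k :: nat and \<sigma> m :: real and v :: "real list"
  assumes "prob_space M"
    and "X \<in> borel_measurable M"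
    and dens: "distributed M lborel X (\<lambda>x. ennreal (\<rho> x))"
    and nonneg: "\<And>x. \<rho> x \<ge> 0"
    and I_int: "is_interval I" and I_closed: "closed I"
    and outside: "\<And>x. x \<notin> I \<Longrightarrow> \<rho> x = 0"
    and pos: "\<And>x. x \<in> interior I \<Longrightarrow> \<rho> x > 0"
    and diff: "\<rho> differentiable_on I"
    and first_moment: "(\<integral>\<^sup>+ x. ennreal \<bar>x\<bar> \<partial>(distr M borel X)) < \<infinity>"
    and opt: "v \<in> opt_percentile_vectors (distr M borel X) k"
    and "\<sigma> > 0"
  shows "v \<in> opt_percentile_vectors (distr M borel (\<lambda>\<omega>. \<sigma> * X \<omega> + m)) k"
proof -
  have "distr M borel (\<lambda>\<omega>. \<sigma> * X \<omega> + m) = distr (distr M borel X) borel (\<lambda>x. \<sigma> * x + m)"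
    using \<open>X \<in> borel_measurable M\<close> by (simp add: distr_distr comp_def)
  then show ?thesis
    using opt_percentile_vectors_distr_affine[OF \<open>\<sigma> > 0\<close>, of "distr M borel X"] opt by auto
qed

end
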